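(* Let $\Theta$ be the set of $f\in R_{\mathrm{hom}}$ such that there exists a line $\ell$ defined over $\mathbb{F}_q$ with $C_f$ singular at every $\mathbb{F}_q$-point of $\ell$. Then \[(q^2 + q + 1)q^{-3(q+1)}(1 - q^{-3q+2}) \leq \mu(\Theta) \leq (q^2+q+1)q^{-3(q+1)}.\]
   Context: Let $q$ be a prime power. For $d\ge1$ let $R_d\subseteq\mathbb{F}_q[x,y,z]$ be the space of homogeneous polynomials of degree $d$ (including $0$), $R_{\mathrm{hom}}=\bigcup_{d\ge1}R_d$, and $\mu(\mathcal{P})=\lim_{d\to\infty}|\mathcal{P}\cap R_d|/|R_d|$. $C_f=\{f=0\}\subseteq\mathbb{P}^2$ ($C_f=\mathbb{P}^2$ if $f=0$, in which case every point is considered singular). "$C_f$ singular at $P$" means $P\in C_f$ and $C_f$ is not smooth at $P$. *)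

theory Defs
  imports Complex_Main
begin

text \<open>Homogeneous polynomials of degree d in x,y,z over a finite field 'a are
represented by their coefficient functions on exponent triples (i,j,k),
supported on the monomials with i+j+k = d.\<close>

type_synonym expo = "nat \<times> nat \<times> nat"

definition monoms :: "nat \<Rightarrow> expo set" where
  "monoms d = {(i,j,k). i + j + k = d}"

definition homog :: "nat \<Rightarrow> (expo \<Rightarrow> 'a::zero) set" where
  "homog d = {c. \<forall>m. m \<notin> monoms d \<longrightarrow> c m = 0}"

definition peval :: "nat \<Rightarrow> (expo \<Rightarrow> 'a::comm_ring_1) \<Rightarrow> 'a \<Rightarrow> 'a \<Rightarrow> 'a \<Rightarrow> 'a" where
  "peval d c x y z = (\<Sum>(i,j,k)\<in>monoms d. c (i,j,k) * x ^ i * y ^ j * z ^ k)"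

definition pdx :: "nat \<Rightarrow> (expo \<Rightarrow> 'a::comm_ring_1) \<Rightarrow> 'a \<Rightarrow> 'a \<Rightarrow> 'a \<Rightarrow> 'a" where
  "pdx d c x y z = (\<Sum>(i,j,k)\<in>monoms d. c (i,j,k) * of_nat i * x ^ (i - 1) * y ^ j * z ^ k)"

definition pdy :: "nat \<Rightarrow> (expo \<Rightarrow> 'a::comm_ring_1) \<Rightarrow> 'a \<Rightarrow> 'a \<Rightarrow> 'a \<Rightarrow> 'a" where
  "pdy d c x y z = (\<Sum>(i,j,k)\<in>monoms d. c (i,j,k) * of_nat j * x ^ i * y ^ (j - 1) * z ^ k)"

definition pdz :: "nat \<Rightarrow> (expo \<Rightarrow> 'a::comm_ring_1) \<Rightarrow> 'a \<Rightarrow> 'a \<Rightarrow> 'a \<Rightarrow> 'a" where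
  "pdz d c x y z = (\<Sum>(i,j,k)\<in>monoms d. c (i,j,k) * of_nat k * x ^ i * y ^ j * z ^ (k - 1))"

text \<open>C_f is singular at the projective point [x:y:z] (Jacobian criterion;
for f = 0 every point is singular).\<close>
definition sing_at :: "nat \<Rightarrow> (expo \<Rightarrow> 'a::comm_ring_1) \<Rightarrow> 'a \<Rightarrow> 'a \<Rightarrow> 'a \<Rightarrow> bool" where
  "sing_at d c x y z \<longleftrightarrow> peval d c x y z = 0 \<and> pdx d c x y z = 0 \<and>
      pdy d c x y z = 0 \<and> pdz d c x y z = 0"

definition Theta :: "nat \<Rightarrow> (expo \<Rightarrow> 'a::{finite,field}) set" where
  "Theta d = {c \<in> homog d. \<exists>a b e. (a, b, e) \<noteq> (0, 0, 0) \<and>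
      (\<forall>x y z. (x, y, z) \<noteq> (0, 0, 0) \<and> a * x + b * y + e * z = 0 \<longrightarrow> sing_at d c x y z)}"

end

theory Submission
  imports Defs "HOL-Computational_Algebra.Polynomial" "HOL-Library.FuncSet" "HOL-Library.Function_Algebras"
begin

text \<open>
  For \<open>d \<ge> 8q + 4\<close>, sending \<open>f \<in> R\<^sub>d\<close> to its jets (value and the two partial derivatives
  of the affine chart) at the \<open>q\<^sup>2 + q + 1\<close> rational points of the plane is a surjective linear
  map onto \<open>F\<^sub>q\<^bsup>3(q\<^sup>2 + q + 1)\<^esup>\<close>: for one point and one coordinate, a product \<open>g(y) h(z)\<close>
  whose factors vanish to order two away from a single value does the job (by \<open>t\<^bsup>q-1\<^esup> = 1\<close>
  for \<open>t \<noteq> 0\<close>). All fibres then have the same size, so from that degree on the proportion of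
  \<open>\<Theta> \<inter> R\<^sub>d\<close> equals the proportion of jet assignments vanishing at every rational point of some
  rational line, and the limit is attained. A line has \<open>q + 1\<close> points and two lines share at
  most one, so the union bound and the second Bonferroni inequality over the \<open>q\<^sup>2 + q + 1\<close>
  lines give the two bounds.
\<close>

type_synonym 'a pt = "'a \<times> 'a \<times> 'a"

lemma finite_monoms: "finite (monoms d)"
proof -
  have "monoms d \<subseteq> {..d} \<times> {..d} \<times> {..d}"
    unfolding monoms_def by auto
  then show ?thesis
    by (rule finite_subset) auto
qed

lemma finite_homog: "finite (homog d :: (expo \<Rightarrow> 'a::{finite,zero}) set)"
proof -
  have "inj_on (\<lambda>c. restrict c (monoms d)) (homog d :: (expo \<Rightarrow> 'a) set)"
  proof (rule inj_onI, rule ext)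
    fix c c' :: "expo \<Rightarrow> 'a" and m
    assume "c \<in> homog d" "c' \<in> homog d" "restrict c (monoms d) = restrict c' (monoms d)"
    then show "c m = c' m"
      unfolding homog_def
      by (cases "m \<in> monoms d"; cases m) (auto dest: fun_cong[of _ _ m])
  qed
  moreover have "(\<lambda>c. restrict c (monoms d)) ` homog d \<subseteq> monoms d \<rightarrow>\<^sub>E (UNIV :: 'a set)"
    by auto
  then have "finite ((\<lambda>c. restrict c (monoms d)) ` (homog d :: (expo \<Rightarrow> 'a) set))"
    by (rule finite_subset) (simp add: finite_PiE finite_monoms)
  ultimately show ?thesis
    using finite_imageD by blast
qed

lemma homog_add: "c \<in> homog d \<Longrightarrow> k \<in> homog d \<Longrightarrow> c + k \<in> homog d"
  and homog_diff: "c \<in> homog d \<Longrightarrow> k \<in> homog d \<Longrightarrow> c - k \<in> homog d"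
  for c k :: "expo \<Rightarrow> 'a::ab_group_add"
  unfolding homog_def by auto

definition coeff_form :: "nat \<Rightarrow> (expo \<Rightarrow> 'a::comm_ring_1) \<Rightarrow> (expo \<Rightarrow> 'a) \<Rightarrow> 'a" where
  "coeff_form d W c = (\<Sum>m\<in>monoms d. c m * W m)"

lemma peval_coeff_form: "peval d c x y z = coeff_form d (\<lambda>(i,j,k). x^i * y^j * z^k) c"
  and pdx_coeff_form: "pdx d c x y z = coeff_form d (\<lambda>(i,j,k). of_nat i * x^(i-1) * y^j * z^k) c"
  and pdy_coeff_form: "pdy d c x y z = coeff_form d (\<lambda>(i,j,k). of_nat j * x^i * y^(j-1) * z^k) c"
  and pdz_coeff_form: "pdz d c x y z = coeff_form d (\<lambda>(i,j,k). of_nat k * x^i * y^j * z^(k-1)) c"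
  unfolding peval_def pdx_def pdy_def pdz_def coeff_form_def
  by (auto simp: mult.assoc intro!: sum.cong)

lemma coeff_form_sum:
  "coeff_form d W (\<lambda>m. \<Sum>i\<in>I. u i * f i m) = (\<Sum>i\<in>I. u i * coeff_form d W (f i))"
  unfolding coeff_form_def
  by (simp add: sum_distrib_left sum_distrib_right mult.assoc sum.swap[of _ I])

lemma coeff_form_add: "coeff_form d W (c + k) = coeff_form d W c + coeff_form d W k"
  and coeff_form_diff: "coeff_form d W (c - k) = coeff_form d W c - coeff_form d W k"
  and coeff_form_zero: "coeff_form d W 0 = 0"
  unfolding coeff_form_def by (simp_all add: algebra_simps sum.distrib sum_subtractf)

definition swap_xy :: "(expo \<Rightarrow> 'a) \<Rightarrow> expo \<Rightarrow> 'a" where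
  "swap_xy c = (\<lambda>(i,j,k). c (j,i,k))"

definition swap_xz :: "(expo \<Rightarrow> 'a) \<Rightarrow> expo \<Rightarrow> 'a" where
  "swap_xz c = (\<lambda>(i,j,k). c (k,j,i))"

lemma swap_xy_homog: "c \<in> homog d \<Longrightarrow> swap_xy c \<in> homog d"
  and swap_xz_homog: "c \<in> homog d \<Longrightarrow> swap_xz c \<in> homog d"
  unfolding homog_def swap_xy_def swap_xz_def monoms_def by (auto simp: add_ac)

lemma peval_swap_xy: "peval d (swap_xy c) x y z = peval d c y x z"
  and pdx_swap_xy: "pdx d (swap_xy c) x y z = pdy d c y x z"
  and pdy_swap_xy: "pdy d (swap_xy c) x y z = pdx d c y x z"
  and pdz_swap_xy: "pdz d (swap_xy c) x y z = pdz d c y x z"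
  unfolding peval_def pdx_def pdy_def pdz_def
  by (auto simp: swap_xy_def monoms_def mult_ac
      intro!: sum.reindex_bij_witness[where i="\<lambda>(i,j,k). (j,i,k)" and j="\<lambda>(i,j,k). (j,i,k)"])

lemma peval_swap_xz: "peval d (swap_xz c) x y z = peval d c z y x"
  and pdx_swap_xz: "pdx d (swap_xz c) x y z = pdz d c z y x"
  and pdy_swap_xz: "pdy d (swap_xz c) x y z = pdy d c z y x"
  and pdz_swap_xz: "pdz d (swap_xz c) x y z = pdx d c z y x"
  unfolding peval_def pdx_def pdy_def pdz_def
  by (auto simp: swap_xz_def monoms_def mult_ac
      intro!: sum.reindex_bij_witness[where i="\<lambda>(i,j,k). (k,j,i)" and j="\<lambda>(i,j,k). (k,j,i)"])

lemma sing_at_swap_xy: "sing_at d (swap_xy c) x y z \<longleftrightarrow> sing_at d c y x z"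
  and sing_at_swap_xz: "sing_at d (swap_xz c) x y z \<longleftrightarrow> sing_at d c z y x"
  unfolding sing_at_def peval_swap_xy pdx_swap_xy pdy_swap_xy pdz_swap_xy
    peval_swap_xz pdx_swap_xz pdy_swap_xz pdz_swap_xz by auto

lemma peval_scale: "peval d c (t*x) (t*y) (t*z) = t^d * peval d c x y z"
  unfolding peval_def sum_distrib_left
  by (rule sum.cong) (auto simp: monoms_def power_mult_distrib power_add mult_ac)

lemma pdx_scale: "pdx d c (t*x) (t*y) (t*z) = t^(d-1) * pdx d c x y z"
  unfolding pdx_def sum_distrib_left
proof (rule sum.cong, simp, clarify)
  fix i j k assume "(i,j,k) \<in> monoms d"
  then have d: "d - 1 = (i - 1) + j + k" if "i > 0"
    using that by (simp add: monoms_def)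
  show "c (i,j,k) * of_nat i * (t*x)^(i-1) * (t*y)^j * (t*z)^k
      = t^(d-1) * (c (i,j,k) * of_nat i * x^(i-1) * y^j * z^k)"
    by (cases "i = 0") (simp_all only: d power_mult_distrib power_add mult_ac, simp)
qed

lemma pdy_scale: "pdy d c (t*x) (t*y) (t*z) = t^(d-1) * pdy d c x y z"
  using pdx_scale[of d "swap_xy c" t y x z] by (simp add: pdx_swap_xy)

lemma pdz_scale: "pdz d c (t*x) (t*y) (t*z) = t^(d-1) * pdz d c x y z"
  using pdx_scale[of d "swap_xz c" t z y x] by (simp add: pdx_swap_xz)

lemma sing_at_scale:
  fixes t :: "'a::field"
  assumes "t \<noteq> 0"
  shows "sing_at d c (t*x) (t*y) (t*z) \<longleftrightarrow> sing_at d c x y z"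
  using assms unfolding sing_at_def peval_scale pdx_scale pdy_scale pdz_scale by simp

lemma euler_identity:
  "x * pdx d c x y z + y * pdy d c x y z + z * pdz d c x y z = of_nat d * peval d c x y z"
  unfolding pdx_def pdy_def pdz_def peval_def sum_distrib_left sum.distrib[symmetric]
proof (rule sum.cong, simp, clarify)
  fix i j k assume "(i,j,k) \<in> monoms d"
  then have d: "d = i + j + k" by (simp add: monoms_def)
  let ?T = "c (i,j,k) * x^i * y^j * z^k"
  have "x * (c (i,j,k) * of_nat i * x^(i-1) * y^j * z^k) = of_nat i * ?T"
    by (cases i) (simp_all add: mult_ac)
  moreover have "y * (c (i,j,k) * of_nat j * x^i * y^(j-1) * z^k) = of_nat j * ?T"
    by (cases j) (simp_all add: mult_ac)
  moreover have "z * (c (i,j,k) * of_nat k * x^i * y^j * z^(k-1)) = of_nat k * ?T"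
    by (cases k) (simp_all add: mult_ac)
  ultimately show "x * (c (i,j,k) * of_nat i * x^(i-1) * y^j * z^k) + y * (c (i,j,k) * of_nat j * x^i * y^(j-1) * z^k)
      + z * (c (i,j,k) * of_nat k * x^i * y^j * z^(k-1)) = of_nat d * ?T"
    unfolding d by (simp add: algebra_simps)
qed

lemma sing_at_chart_x:
  "sing_at d c 1 y z \<longleftrightarrow> peval d c 1 y z = 0 \<and> pdy d c 1 y z = 0 \<and> pdz d c 1 y z = 0"
  using euler_identity[of 1 d c y z] unfolding sing_at_def by auto

definition homog_product :: "nat \<Rightarrow> 'a::comm_ring_1 poly \<Rightarrow> 'a poly \<Rightarrow> expo \<Rightarrow> 'a" where
  "homog_product d g h = (\<lambda>(i,j,k). if i + j + k = d then coeff g j * coeff h k else 0)"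

lemma homog_product_homog: "homog_product d g h \<in> homog d"
  unfolding homog_def homog_product_def monoms_def by auto

lemma sum_monoms_bounded:
  assumes "m + n \<le> d"
    and "\<And>i j k. i + j + k = d \<Longrightarrow> m < j \<or> n < k \<Longrightarrow> F (i,j,k) = 0"
  shows "(\<Sum>e\<in>monoms d. F e) = (\<Sum>j\<le>m. \<Sum>k\<le>n. F (d - j - k, j, k))"
proof -
  let ?emb = "\<lambda>(j,k). (d - j - k, j, k)"
  have sub: "?emb ` ({..m} \<times> {..n}) \<subseteq> monoms d"
    using assms(1) unfolding monoms_def by auto
  have "(\<Sum>e\<in>monoms d. F e) = (\<Sum>e\<in>?emb ` ({..m} \<times> {..n}). F e)"
  proof (rule sum.mono_neutral_right[OF finite_monoms sub], clarify)
    fix i j k assume "(i,j,k) \<in> monoms d" "(i,j,k) \<notin> ?emb ` ({..m} \<times> {..n})"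
    then have "i + j + k = d" "m < j \<or> n < k"
      unfolding monoms_def by (force simp: image_iff)+
    then show "F (i,j,k) = 0" by (rule assms(2))
  qed
  also have "\<dots> = (\<Sum>jk\<in>{..m} \<times> {..n}. F (?emb jk))"
    by (subst sum.reindex) (auto simp: inj_on_def)
  finally show ?thesis
    by (simp add: sum.cartesian_product case_prod_beta)
qed

lemma poly_eq_sum_coeff_le:
  fixes p :: "'a::comm_semiring_1 poly"
  assumes "degree p \<le> n"
  shows "poly p x = (\<Sum>i\<le>n. coeff p i * x^i)"
  unfolding poly_altdef using assms
  by (intro sum.mono_neutral_left) (auto simp: coeff_eq_0)

lemma poly_pderiv_eq_sum:
  fixes g :: "'a::idom poly"
  shows "poly (pderiv g) y = (\<Sum>j\<le>degree g. of_nat j * coeff g j * y^(j-1))"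
proof (cases "degree g")
  case 0
  then obtain c where "g = [:c:]"
    using degree_eq_zeroE by blast
  then show ?thesis using 0 by (simp add: pderiv_pCons)
next
  case (Suc n)
  have "degree (pderiv g) \<le> n"
    using Suc by (intro degree_le) (simp add: coeff_pderiv coeff_eq_0)
  then have "poly (pderiv g) y = (\<Sum>i\<le>n. of_nat (Suc i) * coeff g (Suc i) * y^i)"
    by (simp add: poly_eq_sum_coeff_le coeff_pderiv mult_ac)
  also have "\<dots> = (\<Sum>j\<le>degree g. of_nat j * coeff g j * y^(j-1))"
    unfolding Suc sum.atMost_Suc_shift by simp
  finally show ?thesis .
qed

context
  fixes g h :: "'a::idom poly" and d :: nat
  assumes deg: "degree g + degree h \<le> d"
begin

lemma coeff_form_homog_product:
  "coeff_form d W (homog_product d g h)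
    = (\<Sum>j\<le>degree g. \<Sum>k\<le>degree h. coeff g j * coeff h k * W (d - j - k, j, k))"
  unfolding coeff_form_def using deg
  by (subst sum_monoms_bounded[OF deg]) (auto simp: homog_product_def coeff_eq_0 intro!: sum.cong)

lemma peval_homog_product: "peval d (homog_product d g h) 1 y z = poly g y * poly h z"
  unfolding peval_coeff_form coeff_form_homog_product poly_altdef sum_product
  by (simp add: mult_ac)

lemma pdy_homog_product: "pdy d (homog_product d g h) 1 y z = poly (pderiv g) y * poly h z"
  unfolding pdy_coeff_form coeff_form_homog_product poly_pderiv_eq_sum
  unfolding poly_altdef sum_product by (simp add: mult_ac)

lemma pdz_homog_product: "pdz d (homog_product d g h) 1 y z = poly g y * poly (pderiv h) z"
  unfolding pdz_coeff_form coeff_form_homog_product poly_pderiv_eq_sum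
  unfolding poly_altdef sum_product by (simp add: mult_ac)

end

lemma sing_at_x0_if_x_order_2:
  assumes "\<And>i j k. c (i,j,k) \<noteq> 0 \<Longrightarrow> 2 \<le> i"
  shows "sing_at d c 0 y z"
proof -
  have vanish: "c (i,j,k) * 0^i = 0" "c (i,j,k) * a * 0^i = 0" "c (i,j,k) * a * 0^(i - Suc 0) = 0"
    for i j k a
    using assms[of i j k] by (cases "c (i,j,k) = 0"; simp add: power_0_left)+
  show ?thesis
    unfolding sing_at_def peval_def pdx_def pdy_def pdz_def
    by (intro conjI sum.neutral ballI) (auto simp: vanish)
qed

definition flat_outside :: "'a::idom poly \<Rightarrow> 'a \<Rightarrow> bool" where
  "flat_outside g a \<longleftrightarrow> (\<forall>t. t \<noteq> a \<longrightarrow> poly g t = 0 \<and> poly (pderiv g) t = 0)"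

lemma sing_at_homog_product:
  fixes g h :: "'a::field poly"
  assumes deg: "degree g + degree h + 2 \<le> d"
    and "flat_outside g a" "flat_outside h b"
    and off: "(y, z) \<noteq> (a * x, b * x)"
  shows "sing_at d (homog_product d g h) x y z"
proof (cases "x = 0")
  case True
  have "homog_product d g h (i,j,k) \<noteq> 0 \<Longrightarrow> 2 \<le> i" for i j k
    using deg by (auto simp: homog_product_def split: if_splits dest!: le_degree)
  then show ?thesis
    using True sing_at_x0_if_x_order_2 by blast
next
  case False
  have "degree g + degree h \<le> d" using deg by simp
  moreover have "y / x \<noteq> a \<or> z / x \<noteq> b"
    using off False by (auto simp: field_simps)
  ultimately have "sing_at d (homog_product d g h) 1 (y/x) (z/x)"
    using assms(2,3) unfolding sing_at_chart_x flat_outside_def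
    by (auto simp: peval_homog_product pdy_homog_product pdz_homog_product)
  then show ?thesis
    using sing_at_scale[OF False, of d _ 1 "y/x" "z/x"] False by simp
qed

section \<open>Polynomials flat away from one point\<close>

lemma power_card_minus_one_eq_1:
  fixes x :: "'a::{finite,field}"
  assumes "x \<noteq> 0"
  shows "x ^ (card (UNIV :: 'a set) - 1) = 1"
proof -
  let ?S = "UNIV - {0::'a}"
  have "(\<lambda>y. x * y) ` ?S = ?S"
  proof
    show "?S \<subseteq> (\<lambda>y. x * y) ` ?S"
    proof
      fix y assume "y \<in> ?S"
      then have "y = x * (y / x)" "y / x \<in> ?S"
        using assms by auto
      then show "y \<in> (\<lambda>y. x * y) ` ?S" by blast
    qed
  qed (use assms in auto)
  then have "prod id ?S = prod (\<lambda>y. x * y) ?S"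
    using assms by (metis (no_types, lifting) inj_on_def mult_left_cancel prod.reindex_cong id_apply)
  also have "\<dots> = x ^ card ?S * prod id ?S"
    by (simp add: prod.distrib)
  finally have "x ^ card ?S * prod id ?S = 1 * prod id ?S"
    by simp
  moreover have "prod id ?S \<noteq> 0"
    by simp
  ultimately show ?thesis
    by (simp add: card_Diff_singleton)
qed

lemma two_le_card_field: "2 \<le> card (UNIV :: 'a::{finite,field} set)"
  using card_mono[of "UNIV :: 'a set" "{0, 1}"] by simp

text \<open>By Fermat, \<open>(t - a)^(2(q - 1)) = 1\<close> for \<open>t \<noteq> a\<close>, so \<open>1 - (t - a)^(2(q - 1))\<close>
  vanishes at every \<open>t \<noteq> a\<close>, and its square vanishes there to order two.\<close>

definition flat_bump :: "'a::{finite,field} \<Rightarrow> 'a poly" where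
  "flat_bump a = (1 - [:-a, 1:] ^ (2 * (card (UNIV :: 'a set) - 1)))^2"

definition bump_poly :: "bool \<Rightarrow> 'a::{finite,field} \<Rightarrow> 'a poly" where
  "bump_poly e a = (if e then [:-a, 1:] * flat_bump a else flat_bump a)"

lemma poly_flat_bump: "poly (flat_bump a) a = 1"
  and poly_pderiv_flat_bump: "poly (pderiv (flat_bump a)) a = 0"
  and flat_outside_flat_bump: "flat_outside (flat_bump a) a"
  for a :: "'a::{finite,field}"
proof -
  let ?n = "2 * (card (UNIV :: 'a set) - 1)"
  let ?p = "1 - [:-a, 1:] ^ ?n"
  have n: "2 \<le> ?n"
    using two_le_card_field[where 'a='a] by simp
  have "flat_bump a = ?p * ?p"
    unfolding flat_bump_def by (simp add: power2_eq_square)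
  then have pderiv_flat:
      "poly (pderiv (flat_bump a)) t = poly ?p t * poly (pderiv ?p) t + poly ?p t * poly (pderiv ?p) t"
    for t
    by (simp only: pderiv_mult poly_add poly_mult mult.commute)
  have "poly ?p t = 0" if "t \<noteq> a" for t
  proof -
    have "(t - a) ^ ?n = ((t - a) ^ (card (UNIV :: 'a set) - 1))^2"
      by (simp add: power_mult[symmetric] mult.commute)
    then show ?thesis
      using power_card_minus_one_eq_1[of "t - a"] that by simp
  qed
  then show "flat_outside (flat_bump a) a"
    unfolding flat_outside_def pderiv_flat by (simp add: flat_bump_def)
  show "poly (flat_bump a) a = 1"
    using n by (simp add: flat_bump_def power_0_left)
  have "poly (pderiv ?p) a = 0"
    using n by (simp add: pderiv_diff pderiv_power pderiv_pCons)
  then show "poly (pderiv (flat_bump a)) a = 0"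
    by (simp add: pderiv_flat)
qed

lemma poly_bump_poly: "poly (bump_poly e a) a = (if e then 0 else 1)"
  and poly_pderiv_bump_poly: "poly (pderiv (bump_poly e a)) a = (if e then 1 else 0)"
  and flat_outside_bump_poly: "flat_outside (bump_poly e a) a"
  for a :: "'a::{finite,field}"
proof -
  have "poly (pderiv (bump_poly True a)) t
      = (t - a) * poly (pderiv (flat_bump a)) t + poly (flat_bump a) t" for t
    unfolding bump_poly_def if_True pderiv_mult by (simp add: pderiv_pCons algebra_simps)
  moreover have "poly (bump_poly True a) t = (t - a) * poly (flat_bump a) t" for t
    by (simp add: bump_poly_def algebra_simps)
  ultimately show "poly (bump_poly e a) a = (if e then 0 else 1)"
    and "poly (pderiv (bump_poly e a)) a = (if e then 1 else 0)"
    and "flat_outside (bump_poly e a) a"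
    using poly_flat_bump[of a] poly_pderiv_flat_bump[of a] flat_outside_flat_bump[of a]
    unfolding flat_outside_def
    by (cases e; simp add: bump_poly_def)+
qed

lemma degree_bump_poly: "degree (bump_poly e (a::'a::{finite,field})) \<le> 4 * card (UNIV :: 'a set) + 1"
proof -
  let ?n = "2 * (card (UNIV :: 'a set) - 1)"
  have "degree ([:-a, 1:] ^ ?n) \<le> ?n"
    using degree_power_le[of "[:-a, 1:]" ?n] by simp
  then have "degree (1 - [:-a, 1:] ^ ?n) \<le> ?n"
    by (intro degree_diff_le) auto
  then have "degree (flat_bump a) \<le> 2 * ?n"
    unfolding flat_bump_def using degree_power_le[of "1 - [:-a, 1:] ^ ?n" 2] by simp
  moreover have "degree ([:-a, 1:] * flat_bump a) \<le> 1 + degree (flat_bump a)"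
    using degree_mult_le[of "[:-a, 1:]" "flat_bump a"] by simp
  ultimately show ?thesis
    unfolding bump_poly_def by auto
qed

section \<open>Jets at the rational points of the plane\<close>

definition proj_points :: "'a::field pt set" where
  "proj_points = range (\<lambda>(a,b). (1,a,b)) \<union> range (\<lambda>a. (0,1,a)) \<union> {(0,0,1)}"

lemma proj_points_cases:
  assumes "P \<in> proj_points"
  obtains (x) a b where "P = (1,a,b)" | (y) a where "P = (0,1,a)" | (z) "P = (0,0,1)"
  using assms unfolding proj_points_def by auto

text \<open>The jet of \<open>f\<close> at a point \<open>P\<close> is its value together with the two partial derivatives
  of the affine chart containing \<open>P\<close>; by Euler's identity these determine the third one.\<close>

definition jet_comp :: "nat \<Rightarrow> (expo \<Rightarrow> 'a::comm_ring_1) \<Rightarrow> 'a pt \<Rightarrow> nat \<Rightarrow> 'a" where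
  "jet_comp d c P r = (case P of (x,y,z) \<Rightarrow>
     (if r = 0 then peval d c x y z
      else if r = 1 then (if x \<noteq> 0 then pdy d c x y z else pdx d c x y z)
      else (if x \<noteq> 0 \<or> y \<noteq> 0 then pdz d c x y z else pdy d c x y z)))"

lemma jet_comp_sum: "jet_comp d (\<lambda>m. \<Sum>i\<in>I. u i * f i m) P r = (\<Sum>i\<in>I. u i * jet_comp d (f i) P r)"
  and jet_comp_add: "jet_comp d (c + k) P r = jet_comp d c P r + jet_comp d k P r"
  and jet_comp_diff: "jet_comp d (c - k) P r = jet_comp d c P r - jet_comp d k P r"
  and jet_comp_zero: "jet_comp d 0 P r = 0"
  unfolding jet_comp_def peval_coeff_form pdx_coeff_form pdy_coeff_form pdz_coeff_form
    coeff_form_sum coeff_form_add coeff_form_diff coeff_form_zero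
  by (auto split: prod.split)

lemma jet_comp_eq_0_if_sing_at: "sing_at d c x y z \<Longrightarrow> jet_comp d c (x,y,z) r = 0"
  unfolding jet_comp_def sing_at_def by auto

lemma sing_at_iff_jet_comp:
  assumes "(x,y,z) \<in> proj_points"
  shows "sing_at d c x y z \<longleftrightarrow> (\<forall>r<3. jet_comp d c (x,y,z) r = 0)"
proof -
  have all_less_3: "(\<forall>r<3. Q r) \<longleftrightarrow> Q 0 \<and> Q 1 \<and> Q 2" for Q :: "nat \<Rightarrow> bool"
    by (auto simp: less_Suc_eq numeral_3_eq_3 numeral_2_eq_2)
  from assms show ?thesis
    using euler_identity[of x d c y z] unfolding sing_at_def all_less_3 jet_comp_def
    by (cases rule: proj_points_cases) (auto simp: algebra_simps)
qed

text \<open>In the chart of \<open>P\<close>, the \<open>r\<close>-th point bump is \<open>g(y) h(z)\<close> with \<open>g\<close>, \<open>h\<close> flat away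
  from the coordinates of \<open>P\<close>: its jet at \<open>P\<close> is the \<open>r\<close>-th unit vector, and it is singular
  at every other point of the plane.\<close>

definition point_bump :: "nat \<Rightarrow> 'a::{finite,field} pt \<Rightarrow> nat \<Rightarrow> expo \<Rightarrow> 'a" where
  "point_bump d P r = (case P of (x,y,z) \<Rightarrow>
     (if x \<noteq> 0 then homog_product d (bump_poly (r = 1) y) (bump_poly (r = 2) z)
      else if y \<noteq> 0 then swap_xy (homog_product d (bump_poly (r = 1) 0) (bump_poly (r = 2) z))
      else swap_xz (homog_product d (bump_poly (r = 2) 0) (bump_poly (r = 1) 0))))"

lemma point_bump_homog: "point_bump d P r \<in> homog d"
  unfolding point_bump_def
  by (auto split: prod.split intro: homog_product_homog swap_xy_homog swap_xz_homog)

lemma sing_at_point_bump: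
  fixes P Q :: "'a::{finite,field} pt"
  assumes "P \<in> proj_points" "Q \<in> proj_points" "Q \<noteq> P"
    and d: "8 * card (UNIV :: 'a set) + 4 \<le> d"
  shows "sing_at d (point_bump d P r) (fst Q) (fst (snd Q)) (snd (snd Q))"
proof -
  have deg: "degree (bump_poly e a) + degree (bump_poly e' a') + 2 \<le> d" for e e' and a a' :: 'a
    using degree_bump_poly[of e a] degree_bump_poly[of e' a'] d by simp
  obtain x y z where Q: "Q = (x,y,z)"
    by (cases Q)
  have "Q \<noteq> (0,0,0)"
    using assms(2) by (cases rule: proj_points_cases) auto
  with assms(1) show ?thesis
    using assms(2,3) unfolding Q
    by (cases rule: proj_points_cases; cases rule: proj_points_cases[OF assms(2)[unfolded Q]])
      (auto simp: point_bump_def sing_at_swap_xy sing_at_swap_xz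
        intro!: sing_at_homog_product[OF deg flat_outside_bump_poly flat_outside_bump_poly])
qed

lemma jet_comp_point_bump:
  fixes P :: "'a::{finite,field} pt"
  assumes "P \<in> proj_points" and d: "8 * card (UNIV :: 'a set) + 4 \<le> d"
    and "r < 3" "s < 3"
  shows "jet_comp d (point_bump d P r) P s = (if r = s then 1 else 0)"
proof -
  have deg: "degree (bump_poly e a) + degree (bump_poly e' a') \<le> d" for e e' and a a' :: 'a
    using degree_bump_poly[of e a] degree_bump_poly[of e' a'] d by simp
  have "r = 0 \<or> r = 1 \<or> r = 2" "s = 0 \<or> s = 1 \<or> s = 2"
    using assms(3,4) by auto
  with assms(1) show ?thesis
    by (cases rule: proj_points_cases)
      (auto simp: point_bump_def jet_comp_def peval_swap_xy pdx_swap_xy pdz_swap_xy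
        peval_swap_xz pdx_swap_xz pdy_swap_xz peval_homog_product[OF deg] pdy_homog_product[OF deg]
        pdz_homog_product[OF deg] poly_bump_poly poly_pderiv_bump_poly)
qed

definition jet_lift :: "nat \<Rightarrow> ('a::{finite,field} pt \<times> nat \<Rightarrow> 'a) \<Rightarrow> expo \<Rightarrow> 'a" where
  "jet_lift d w = (\<lambda>m. \<Sum>(P,r)\<in>proj_points \<times> {..<3}. w (P,r) * point_bump d P r m)"

lemma jet_lift_homog: "jet_lift d w \<in> homog d"
proof -
  have outside: "point_bump d P r m = 0" if "m \<notin> monoms d" for P r m
    using point_bump_homog[of d P r] that unfolding homog_def by (cases m) auto
  show ?thesis
    unfolding homog_def jet_lift_def by (auto intro!: sum.neutral simp: outside)
qed

lemma jet_comp_jet_lift: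
  fixes Q :: "'a::{finite,field} pt"
  assumes Q: "Q \<in> proj_points" and d: "8 * card (UNIV :: 'a set) + 4 \<le> d" and "s < 3"
  shows "jet_comp d (jet_lift d w) Q s = w (Q,s)"
proof -
  have eq_Q: "P = Q" if "jet_comp d (point_bump d P r) Q s \<noteq> 0" "P \<in> proj_points" for P r
    using jet_comp_eq_0_if_sing_at[OF sing_at_point_bump[OF that(2) Q _ d]] that(1) by auto
  have "jet_comp d (jet_lift d w) Q s
      = (\<Sum>Pr\<in>proj_points \<times> {..<3}. w Pr * jet_comp d (point_bump d (fst Pr) (snd Pr)) Q s)"
    unfolding jet_lift_def case_prod_beta prod.collapse by (rule jet_comp_sum)
  also have "\<dots> = (\<Sum>Pr\<in>{Q} \<times> {..<3}. w Pr * jet_comp d (point_bump d (fst Pr) (snd Pr)) Q s)"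
    using Q by (intro sum.mono_neutral_right) (auto dest: eq_Q)
  also have "\<dots> = (\<Sum>r<3. w (Q,r) * jet_comp d (point_bump d Q r) Q s)"
    by (rule sum.reindex_bij_witness[of _ "Pair Q" snd]) auto
  also have "\<dots> = (\<Sum>r<3. w (Q,r) * (if r = s then 1 else 0))"
    using Q d \<open>s < 3\<close> by (simp add: jet_comp_point_bump)
  also have "\<dots> = w (Q,s)"
    using \<open>s < 3\<close> by (simp add: if_distrib sum.delta cong: if_cong)
  finally show ?thesis .
qed

section \<open>Lines of the projective plane\<close>

fun dot_pt :: "'a::comm_ring_1 pt \<Rightarrow> 'a pt \<Rightarrow> 'a" where
  "dot_pt (a,b,e) (x,y,z) = a*x + b*y + e*z"

fun scale_pt :: "'a::comm_ring_1 \<Rightarrow> 'a pt \<Rightarrow> 'a pt" where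
  "scale_pt t (x,y,z) = (t*x, t*y, t*z)"

fun cross_pt :: "'a::comm_ring_1 pt \<Rightarrow> 'a pt \<Rightarrow> 'a pt" where
  "cross_pt (a,b,e) (x,y,z) = (b*z - e*y, e*x - a*z, a*y - b*x)"

fun proj_rep :: "'a::field pt \<Rightarrow> 'a pt" where
  "proj_rep (x,y,z) = (if x \<noteq> 0 then (1, y/x, z/x) else if y \<noteq> 0 then (0, 1, z/y) else (0,0,1))"

fun rep_scale :: "'a::field pt \<Rightarrow> 'a" where
  "rep_scale (x,y,z) = (if x \<noteq> 0 then x else if y \<noteq> 0 then y else z)"

lemma proj_rep_in_proj_points: "proj_rep v \<in> proj_points"
  by (cases v) (auto simp: proj_points_def)

lemma rep_scale_nonzero: "v \<noteq> (0,0,0) \<Longrightarrow> rep_scale v \<noteq> 0"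
  by (cases v) auto

lemma scale_rep_scale_proj_rep: "v \<noteq> (0,0,0) \<Longrightarrow> scale_pt (rep_scale v) (proj_rep v) = v"
  by (cases v) auto

lemma proj_rep_proj_point: "P \<in> proj_points \<Longrightarrow> proj_rep P = P"
  and rep_scale_proj_point: "P \<in> proj_points \<Longrightarrow> rep_scale P = 1"
  by (auto simp: proj_points_def)

lemma proj_point_nonzero: "P \<in> proj_points \<Longrightarrow> P \<noteq> (0,0,0)"
  by (auto simp: proj_points_def)

lemma proj_rep_scale: "t \<noteq> 0 \<Longrightarrow> proj_rep (scale_pt t v) = proj_rep v"
  by (cases v) (auto simp: field_simps)

lemma rep_scale_scale: "t \<noteq> 0 \<Longrightarrow> rep_scale (scale_pt t v) = t * rep_scale v"
  by (cases v) auto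

lemma scale_pt_eq_0_iff: "scale_pt t v = (0,0,0) \<longleftrightarrow> t = 0 \<or> v = (0,0,0)"
  for t :: "'a::field"
  by (cases v) auto

lemma dot_pt_scale_right: "dot_pt L (scale_pt t v) = t * dot_pt L v"
  and dot_pt_scale_left: "dot_pt (scale_pt t L) v = t * dot_pt L v"
  by (cases L; cases v; simp add: algebra_simps)+

lemma dot_pt_proj_rep_right: "v \<noteq> (0,0,0) \<Longrightarrow> dot_pt L (proj_rep v) = 0 \<longleftrightarrow> dot_pt L v = 0"
  and dot_pt_proj_rep_left: "L \<noteq> (0,0,0) \<Longrightarrow> dot_pt (proj_rep L) v = 0 \<longleftrightarrow> dot_pt L v = 0"
  for v L :: "'a::field pt"
  using dot_pt_scale_right[of L "rep_scale v" "proj_rep v"] dot_pt_scale_left[of "rep_scale L" "proj_rep L" v]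
  by (simp_all add: scale_rep_scale_proj_rep rep_scale_nonzero)

lemma proj_points_eq_if_scale_eq:
  fixes P P' :: "'a::field pt"
  assumes "P \<in> proj_points" "P' \<in> proj_points" "scale_pt t P = scale_pt t' P'" "t \<noteq> 0" "t' \<noteq> 0"
  shows "P = P'"
  using arg_cong[OF assms(3), of proj_rep] assms(1,2,4,5)
  by (simp add: proj_rep_scale proj_rep_proj_point)

lemma cross_pt_eq_0:
  fixes u v :: "'a::field pt"
  assumes "u \<noteq> (0,0,0)" "cross_pt u v = (0,0,0)"
  obtains t where "v = scale_pt t u"
proof -
  obtain a b e where u: "u = (a,b,e)" by (cases u)
  obtain x y z where v: "v = (x,y,z)" by (cases v)
  have eqs: "b*z = e*y" "e*x = a*z" "a*y = b*x"
    using assms(2) unfolding u v by auto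
  consider "a \<noteq> 0" | "b \<noteq> 0" | "e \<noteq> 0"
    using assms(1) u by auto
  then show ?thesis
  proof cases
    case 1
    then have "v = scale_pt (x/a) u" unfolding u v using eqs by (auto simp: field_simps)
    then show ?thesis by (rule that)
  next
    case 2
    then have "v = scale_pt (y/b) u" unfolding u v using eqs by (auto simp: field_simps)
    then show ?thesis by (rule that)
  next
    case 3
    then have "v = scale_pt (z/e) u" unfolding u v using eqs by (auto simp: field_simps)
    then show ?thesis by (rule that)
  qed
qed

lemma cross_pt_cross_pt_eq_0:
  assumes "dot_pt L P = 0" "dot_pt L P' = 0"
  shows "cross_pt L (cross_pt P P') = (0,0,0)"
proof -
  obtain a b e where L: "L = (a,b,e)" by (cases L)
  obtain x y z where P: "P = (x,y,z)" by (cases P)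
  obtain x' y' z' where P': "P' = (x',y',z')" by (cases P')
  have "cross_pt L (cross_pt P P') = (x * dot_pt L P' - x' * dot_pt L P,
      y * dot_pt L P' - y' * dot_pt L P, z * dot_pt L P' - z' * dot_pt L P)"
    unfolding L P P' by (simp add: algebra_simps)
  with assms show ?thesis by simp
qed

lemma cross_pt_proj_points_nonzero:
  fixes P P' :: "'a::field pt"
  assumes "P \<in> proj_points" "P' \<in> proj_points" "P \<noteq> P'"
  shows "cross_pt P P' \<noteq> (0,0,0)"
proof
  assume "cross_pt P P' = (0,0,0)"
  then obtain t where t: "P' = scale_pt t P"
    using cross_pt_eq_0 proj_point_nonzero[OF assms(1)] by blast
  then have "t \<noteq> 0"
    using proj_point_nonzero[OF assms(2)] by (auto simp: scale_pt_eq_0_iff)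
  then have "P = P'"
    using proj_points_eq_if_scale_eq[OF assms(1,2), of t 1] t
    by (cases P) simp
  with assms(3) show False ..
qed

definition line_points :: "'a::field pt \<Rightarrow> 'a pt set" where
  "line_points L = {P \<in> proj_points. dot_pt L P = 0}"

text \<open>Two points of both lines would have their cross product proportional to both
  line vectors.\<close>

lemma card_line_points_Int_le_1:
  fixes L L' :: "'a::field pt"
  assumes "L \<in> proj_points" "L' \<in> proj_points" "L \<noteq> L'"
  shows "card (line_points L \<inter> line_points L') \<le> 1"
proof -
  have "P = P'" if P: "P \<in> line_points L \<inter> line_points L'" and P': "P' \<in> line_points L \<inter> line_points L'"
    for P P'
  proof (rule ccontr)
    assume "P \<noteq> P'"
    let ?w = "cross_pt P P'"
    have "?w \<noteq> (0,0,0)"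
      using P P' \<open>P \<noteq> P'\<close> by (intro cross_pt_proj_points_nonzero) (auto simp: line_points_def)
    moreover have "cross_pt L ?w = (0,0,0)" "cross_pt L' ?w = (0,0,0)"
      using P P' by (auto simp: line_points_def intro: cross_pt_cross_pt_eq_0)
    then obtain t t' where "?w = scale_pt t L" and "?w = scale_pt t' L'"
      using cross_pt_eq_0 proj_point_nonzero[OF assms(1)] proj_point_nonzero[OF assms(2)]
      by metis
    ultimately have "scale_pt t L = scale_pt t' L'" "t \<noteq> 0" "t' \<noteq> 0"
      by (metis scale_pt_eq_0_iff)+
    then have "L = L'"
      by (rule proj_points_eq_if_scale_eq[OF assms(1,2)])
    with assms(3) show False ..
  qed
  then show ?thesis
    using card_le_Suc0_iff_eq[of "line_points L \<inter> line_points L'"]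
    by (cases "finite (line_points L \<inter> line_points L')") auto
qed

lemma card_UNIV_prod: "card (UNIV :: ('a::finite \<times> 'b::finite) set) = card (UNIV :: 'a set) * card (UNIV :: 'b set)"
  using card_cartesian_product[of "UNIV :: 'a set" "UNIV :: 'b set"] by simp

lemma card_proj_points:
  "card (proj_points :: 'a::{finite,field} pt set) = card (UNIV :: 'a set)^2 + card (UNIV :: 'a set) + 1"
proof -
  let ?A = "range (\<lambda>(a::'a, b::'a). (1::'a, a, b))" and ?B = "range (\<lambda>a::'a. (0::'a, 1::'a, a))"
  have "card ?A = card (UNIV :: 'a set)^2"
    by (subst card_image) (auto simp: inj_on_def card_UNIV_prod power2_eq_square)
  moreover have "card ?B = card (UNIV :: 'a set)"
    by (subst card_image) (auto simp: inj_on_def)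
  moreover have "card (?A \<union> ?B \<union> {(0,0,1)}) = card ?A + card ?B + 1"
    by (subst card_Un_disjoint; auto simp: card_Un_disjoint)+
  ultimately show ?thesis
    unfolding proj_points_def by simp
qed

lemma card_dot_pt_eq_0:
  fixes L :: "'a::{finite,field} pt"
  assumes "L \<in> proj_points"
  shows "card {v. dot_pt L v = 0} = card (UNIV :: 'a set)^2"
proof -
  have "\<exists>f. inj f \<and> {v. dot_pt L v = 0} = range (f :: 'a \<times> 'a \<Rightarrow> 'a pt)"
    using assms
  proof (cases rule: proj_points_cases)
    case (x a b)
    have "{v. dot_pt L v = 0} = range (\<lambda>(y,z). (-(a*y + b*z), y, z))"
      by (auto simp: x image_iff) algebra
    then show ?thesis
      by (intro exI[of _ "\<lambda>(y,z). (-(a*y + b*z), y, z)"]) (auto simp: inj_on_def)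
  next
    case (y a)
    have "{v. dot_pt L v = 0} = range (\<lambda>(x,z). (x, -(a*z), z))"
      by (auto simp: y image_iff) algebra
    then show ?thesis
      by (intro exI[of _ "\<lambda>(x,z). (x, -(a*z), z)"]) (auto simp: inj_on_def)
  next
    case z
    have "{v. dot_pt L v = 0} = range (\<lambda>(x,y). (x, y, 0))"
      by (auto simp: z image_iff)
    then show ?thesis
      by (intro exI[of _ "\<lambda>(x,y). (x, y, 0)"]) (auto simp: inj_on_def)
  qed
  then show ?thesis
    by (auto simp: card_image card_UNIV_prod power2_eq_square)
qed

lemma bij_betw_scale_line_points:
  fixes L :: "'a::field pt"
  shows "bij_betw (\<lambda>(P,t). scale_pt t P) (line_points L \<times> (UNIV - {0})) ({v. dot_pt L v = 0} - {(0,0,0)})"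
proof (rule bij_betwI')
  fix Pt Pt' assume Pt: "Pt \<in> line_points L \<times> (UNIV - {0::'a})"
    and Pt': "Pt' \<in> line_points L \<times> (UNIV - {0::'a})"
  obtain P t P' t' where eqs: "Pt = (P,t)" "Pt' = (P',t')"
    by (cases Pt, cases Pt')
  have P: "P \<in> proj_points" "t \<noteq> 0" and P': "P' \<in> proj_points" "t' \<noteq> 0"
    using Pt Pt' by (auto simp: eqs line_points_def)
  have "P = P' \<and> t = t'" if eq: "scale_pt t P = scale_pt t' P'"
  proof
    show "P = P'"
      using proj_points_eq_if_scale_eq[OF P(1) P'(1) eq P(2) P'(2)] .
    show "t = t'"
      using arg_cong[OF eq, of rep_scale] P P' by (simp add: rep_scale_scale rep_scale_proj_point)
  qed
  then show "((\<lambda>(P,t). scale_pt t P) Pt = (\<lambda>(P,t). scale_pt t P) Pt') = (Pt = Pt')"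
    unfolding eqs by auto
next
  fix Pt assume "Pt \<in> line_points L \<times> (UNIV - {0::'a})"
  then obtain P t where "Pt = (P,t)" "P \<in> proj_points" "dot_pt L P = 0" "t \<noteq> 0"
    by (auto simp: line_points_def)
  then show "(\<lambda>(P,t). scale_pt t P) Pt \<in> {v. dot_pt L v = 0} - {(0,0,0)}"
    by (simp add: dot_pt_scale_right scale_pt_eq_0_iff proj_point_nonzero)
next
  fix v assume v: "v \<in> {v. dot_pt L v = 0} - {(0,0,0)}"
  then have "(proj_rep v, rep_scale v) \<in> line_points L \<times> (UNIV - {0::'a})"
    by (simp add: line_points_def proj_rep_in_proj_points rep_scale_nonzero dot_pt_proj_rep_right)
  moreover have "v = (\<lambda>(P,t). scale_pt t P) (proj_rep v, rep_scale v)"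
    using v by (simp add: scale_rep_scale_proj_rep)
  ultimately show "\<exists>Pt\<in>line_points L \<times> (UNIV - {0::'a}). v = (\<lambda>(P,t). scale_pt t P) Pt"
    by blast
qed

lemma card_line_points:
  fixes L :: "'a::{finite,field} pt"
  assumes L: "L \<in> proj_points"
  shows "card (line_points L) = card (UNIV :: 'a set) + 1"
proof -
  let ?q = "card (UNIV :: 'a set)"
  have "card (line_points L \<times> (UNIV - {0::'a})) = card ({v. dot_pt L v = 0} - {(0,0,0)})"
    by (rule bij_betw_same_card[OF bij_betw_scale_line_points])
  moreover have "(0,0,0) \<in> {v. dot_pt L v = 0}"
    by (cases L) simp
  ultimately have "card (line_points L) * (?q - 1) = (?q + 1) * (?q - 1)"
    using card_dot_pt_eq_0[OF L]
    by (simp add: card_cartesian_product card_Diff_singleton power2_eq_square algebra_simps)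
  moreover have "?q - 1 \<noteq> 0"
    using two_le_card_field[where 'a='a] by simp
  ultimately show ?thesis
    by (metis mult_right_cancel)
qed

lemma sing_at_iff_jet_comp_proj_rep:
  assumes "(x,y,z) \<noteq> (0,0,0)"
  shows "sing_at d c x y z \<longleftrightarrow> (\<forall>r<3. jet_comp d c (proj_rep (x,y,z)) r = 0)"
proof -
  obtain x' y' z' where rep: "proj_rep (x,y,z) = (x',y',z')"
    by (cases "proj_rep (x,y,z)")
  let ?t = "rep_scale (x,y,z)"
  have "(x,y,z) = (?t*x', ?t*y', ?t*z')"
    using scale_rep_scale_proj_rep[OF assms] rep by simp
  then have "sing_at d c x y z \<longleftrightarrow> sing_at d c x' y' z'"
    using sing_at_scale[OF rep_scale_nonzero[OF assms]] by (metis prod.inject)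
  also have "\<dots> \<longleftrightarrow> (\<forall>r<3. jet_comp d c (x',y',z') r = 0)"
    using proj_rep_in_proj_points[of "(x,y,z)"] rep by (simp add: sing_at_iff_jet_comp)
  finally show ?thesis
    unfolding rep .
qed

lemma Theta_iff:
  "c \<in> Theta d \<longleftrightarrow> c \<in> homog d \<and> (\<exists>L\<in>proj_points. \<forall>P\<in>line_points L. \<forall>r<3. jet_comp d c P r = 0)"
proof
  assume "c \<in> Theta d"
  then obtain a b e where c: "c \<in> homog d" and nz: "(a,b,e) \<noteq> (0,0,0)"
    and sing: "\<And>x y z. (x,y,z) \<noteq> (0,0,0) \<and> a*x + b*y + e*z = 0 \<Longrightarrow> sing_at d c x y z"
    unfolding Theta_def by blast
  have "\<forall>r<3. jet_comp d c P r = 0" if P: "P \<in> line_points (proj_rep (a,b,e))" for P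
  proof -
    obtain x y z where xyz: "P = (x,y,z)" by (cases P)
    have "dot_pt (a,b,e) P = 0"
      using P nz by (simp add: line_points_def dot_pt_proj_rep_left del: proj_rep.simps)
    moreover have "P \<noteq> (0,0,0)"
      using P by (simp add: line_points_def proj_point_nonzero del: proj_rep.simps)
    ultimately have "sing_at d c x y z"
      by (intro sing) (simp add: xyz)
    then show ?thesis
      using P by (simp add: xyz line_points_def sing_at_iff_jet_comp)
  qed
  with c show "c \<in> homog d \<and> (\<exists>L\<in>proj_points. \<forall>P\<in>line_points L. \<forall>r<3. jet_comp d c P r = 0)"
    using proj_rep_in_proj_points by blast
next
  assume "c \<in> homog d \<and> (\<exists>L\<in>proj_points. \<forall>P\<in>line_points L. \<forall>r<3. jet_comp d c P r = 0)"
  then obtain L where c: "c \<in> homog d" and L: "L \<in> proj_points"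
    and jet: "\<And>P. P \<in> line_points L \<Longrightarrow> \<forall>r<3. jet_comp d c P r = 0"
    by blast
  obtain a b e where abe: "L = (a,b,e)" by (cases L)
  have "sing_at d c x y z" if v: "(x,y,z) \<noteq> (0,0,0)" "a*x + b*y + e*z = 0" for x y z
  proof -
    have "proj_rep (x,y,z) \<in> line_points L"
      using v by (simp add: line_points_def proj_rep_in_proj_points dot_pt_proj_rep_right abe
          del: proj_rep.simps)
    then show ?thesis
      using v(1) jet by (simp add: sing_at_iff_jet_comp_proj_rep del: proj_rep.simps)
  qed
  moreover have "(a,b,e) \<noteq> (0,0,0)"
    using proj_point_nonzero[OF L] abe by simp
  ultimately show "c \<in> Theta d"
    unfolding Theta_def using c by blast
qed

section \<open>Counting through the jet map\<close>

definition jet_space :: "('a::{finite,field} pt \<times> nat \<Rightarrow> 'a) set" where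
  "jet_space = proj_points \<times> {..<3} \<rightarrow>\<^sub>E UNIV"

definition jet_map :: "nat \<Rightarrow> (expo \<Rightarrow> 'a::{finite,field}) \<Rightarrow> 'a pt \<times> nat \<Rightarrow> 'a" where
  "jet_map d c = restrict (\<lambda>(P,r). jet_comp d c P r) (proj_points \<times> {..<3})"

definition bad_jets :: "('a::{finite,field} pt \<times> nat \<Rightarrow> 'a) set" where
  "bad_jets = {w \<in> jet_space. \<exists>L\<in>proj_points. \<forall>P\<in>line_points L. \<forall>r<3. w (P,r) = 0}"

definition jet_kernel :: "nat \<Rightarrow> (expo \<Rightarrow> 'a::{finite,field}) set" where
  "jet_kernel d = {c \<in> homog d. jet_map d c = jet_map d 0}"

lemma finite_jet_space: "finite jet_space"
  by (simp add: jet_space_def finite_PiE)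

lemma jet_map_in_jet_space: "jet_map d c \<in> jet_space"
  unfolding jet_map_def jet_space_def by auto

lemma jet_map_apply: "P \<in> proj_points \<Longrightarrow> r < 3 \<Longrightarrow> jet_map d c (P,r) = jet_comp d c P r"
  by (simp add: jet_map_def)

lemma jet_map_eq_iff:
  assumes "w \<in> jet_space"
  shows "jet_map d c = w \<longleftrightarrow> (\<forall>P\<in>proj_points. \<forall>r<3. jet_comp d c P r = w (P,r))"
proof -
  have "jet_map d c = w \<longleftrightarrow> (\<forall>Pr\<in>proj_points \<times> {..<3}. jet_map d c Pr = w Pr)"
    using assms jet_map_in_jet_space[of d c] unfolding jet_space_def
    by (metis PiE_ext)
  then show ?thesis
    by (auto simp: jet_map_def)
qed

lemma Theta_eq_jet_map_vimage: "Theta d = {c \<in> homog d. jet_map d c \<in> bad_jets}"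
  by (rule set_eqI)
    (auto simp: Theta_iff bad_jets_def jet_map_in_jet_space jet_map_apply line_points_def)

lemma card_jet_map_fibre:
  fixes w :: "'a::{finite,field} pt \<times> nat \<Rightarrow> 'a"
  assumes d: "8 * card (UNIV :: 'a set) + 4 \<le> d" and w: "w \<in> jet_space"
  shows "card {c \<in> homog d. jet_map d c = w} = card (jet_kernel d :: (expo \<Rightarrow> 'a) set)"
proof -
  let ?p = "jet_lift d w"
  have p: "jet_comp d ?p P r = w (P,r)" if "P \<in> proj_points" "r < 3" for P r
    using jet_comp_jet_lift[OF that(1) d that(2)] .
  have "bij_betw (\<lambda>k. ?p + k) (jet_kernel d) {c \<in> homog d. jet_map d c = w}"
  proof (rule bij_betw_byWitness[where f'="\<lambda>c. c - ?p"])
    show "(\<lambda>k. ?p + k) ` jet_kernel d \<subseteq> {c \<in> homog d. jet_map d c = w}"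
      using w p by (auto simp: homog_add jet_lift_homog jet_map_eq_iff jet_map_in_jet_space
          jet_comp_add jet_comp_zero jet_map_apply jet_kernel_def)
    show "(\<lambda>c. c - ?p) ` {c \<in> homog d. jet_map d c = w} \<subseteq> jet_kernel d"
      using w p by (auto simp: homog_diff jet_lift_homog jet_map_eq_iff jet_map_in_jet_space
          jet_comp_diff jet_comp_zero jet_map_apply jet_kernel_def)
  qed auto
  from bij_betw_same_card[OF this] show ?thesis
    by (rule sym)
qed

lemma card_jet_map_vimage:
  fixes S :: "('a::{finite,field} pt \<times> nat \<Rightarrow> 'a) set"
  assumes d: "8 * card (UNIV :: 'a set) + 4 \<le> d" and S: "S \<subseteq> jet_space"
  shows "card {c \<in> homog d. jet_map d c \<in> S} = card S * card (jet_kernel d :: (expo \<Rightarrow> 'a) set)"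
proof -
  have "{c \<in> homog d. jet_map d c \<in> S} = (\<Union>w\<in>S. {c \<in> homog d. jet_map d c = w})"
    by auto
  also have "card \<dots> = (\<Sum>w\<in>S. card {c \<in> homog d. jet_map d c = w})"
  proof (rule card_UN_disjoint)
    show "finite S"
      using S finite_jet_space by (rule finite_subset)
  qed (auto intro: finite_subset[OF _ finite_homog])
  also have "\<dots> = (\<Sum>w\<in>S. card (jet_kernel d :: (expo \<Rightarrow> 'a) set))"
    using S card_jet_map_fibre[OF d] by (intro sum.cong) auto
  also have "\<dots> = card S * card (jet_kernel d :: (expo \<Rightarrow> 'a) set)"
    by simp
  finally show ?thesis .
qed

lemma Theta_density_eq_bad_jets_density:
  assumes "8 * card (UNIV :: 'a::{finite,field} set) + 4 \<le> d"
  shows "real (card (Theta d :: (expo \<Rightarrow> 'a) set)) / real (card (homog d :: (expo \<Rightarrow> 'a) set))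
       = real (card (bad_jets :: ('a pt \<times> nat \<Rightarrow> 'a) set)) / real (card (jet_space :: ('a pt \<times> nat \<Rightarrow> 'a) set))"
proof -
  have "card (Theta d :: (expo \<Rightarrow> 'a) set) = card (bad_jets :: ('a pt \<times> nat \<Rightarrow> 'a) set) * card (jet_kernel d :: (expo \<Rightarrow> 'a) set)"
    unfolding Theta_eq_jet_map_vimage by (rule card_jet_map_vimage[OF assms]) (auto simp: bad_jets_def)
  moreover have "card (homog d :: (expo \<Rightarrow> 'a) set) = card (jet_space :: ('a pt \<times> nat \<Rightarrow> 'a) set) * card (jet_kernel d :: (expo \<Rightarrow> 'a) set)"
    using card_jet_map_vimage[OF assms subset_refl] by (simp add: jet_map_in_jet_space)
  moreover have "card (jet_kernel d :: (expo \<Rightarrow> 'a) set) \<noteq> 0"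
  proof -
    have "0 \<in> (jet_kernel d :: (expo \<Rightarrow> 'a) set)"
      by (simp add: homog_def jet_kernel_def)
    moreover have "finite (jet_kernel d :: (expo \<Rightarrow> 'a) set)"
      unfolding jet_kernel_def by (auto intro: finite_subset[OF _ finite_homog])
    ultimately show ?thesis
      by auto
  qed
  ultimately show ?thesis
    by simp
qed

section \<open>Jet assignments vanishing on a line\<close>

lemma card_UN_ge_sum_minus_pairs:
  assumes "finite I" "\<And>i. i \<in> I \<Longrightarrow> finite (A i)"
    and "\<And>i j. i \<in> I \<Longrightarrow> j \<in> I \<Longrightarrow> i \<noteq> j \<Longrightarrow> card (A i \<inter> A j) \<le> K"
  shows "(\<Sum>i\<in>I. real (card (A i))) - real K * (real (card I) * (real (card I) - 1) / 2)
      \<le> real (card (\<Union>i\<in>I. A i))"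
  using assms
proof (induction I rule: finite_induct)
  case empty
  then show ?case by simp
next
  case (insert x F)
  let ?U = "\<Union>i\<in>F. A i" and ?n = "real (card F)"
  have fin: "finite (A x)" "finite ?U"
    using insert.hyps(1) insert.prems(1) by auto
  have "A x \<inter> ?U = (\<Union>j\<in>F. A x \<inter> A j)"
    by blast
  then have "card (A x \<inter> ?U) \<le> (\<Sum>j\<in>F. card (A x \<inter> A j))"
    by (simp only: card_UN_le[OF insert.hyps(1)])
  also have "\<dots> \<le> card F * K"
  proof -
    have "card (A x \<inter> A j) \<le> K" if "j \<in> F" for j
      using insert.prems(2)[of x j] insert.hyps(2) that by auto
    then show ?thesis
      using sum_bounded_above[of F "\<lambda>j. card (A x \<inter> A j)" K] by (simp only: of_nat_id)
  qed
  finally have inter: "real (card (A x \<inter> ?U)) \<le> ?n * real K"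
    by (simp only: of_nat_le_iff flip: of_nat_mult)
  have union: "real (card (A x \<union> ?U)) = real (card (A x)) + real (card ?U) - real (card (A x \<inter> ?U))"
    using card_Un_Int[OF fin] by simp
  have IH: "(\<Sum>i\<in>F. real (card (A i))) - real K * (?n * (?n - 1) / 2) \<le> real (card ?U)"
    using insert.IH insert.prems by simp
  have pairs: "real K * (real (card (insert x F)) * (real (card (insert x F)) - 1) / 2)
      = real K * (?n * (?n - 1) / 2) + ?n * real K"
    using insert.hyps by (simp add: field_simps)
  have sum: "(\<Sum>i\<in>insert x F. real (card (A i))) = real (card (A x)) + (\<Sum>i\<in>F. real (card (A i)))"
    using insert.hyps by simp
  show ?case
    unfolding pairs sum UN_insert using inter union IH by linarith
qed

definition jets_vanishing_on :: "('a::{finite,field} pt \<times> nat) set \<Rightarrow> ('a pt \<times> nat \<Rightarrow> 'a) set" where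
  "jets_vanishing_on S = {w \<in> jet_space. \<forall>x\<in>S. w x = 0}"

lemma card_jets_vanishing_on:
  fixes S :: "('a::{finite,field} pt \<times> nat) set"
  assumes "S \<subseteq> proj_points \<times> {..<3}"
  shows "card (jets_vanishing_on S) = card (UNIV :: 'a set) ^ (3 * card (proj_points :: 'a pt set) - card S)"
proof -
  let ?B = "\<lambda>x. if x \<in> S then {0} else (UNIV :: 'a set)"
  have "jets_vanishing_on S = PiE (proj_points \<times> {..<3}) ?B"
  proof (intro set_eqI iffI)
    fix w assume "w \<in> jets_vanishing_on S"
    then show "w \<in> PiE (proj_points \<times> {..<3}) ?B"
      unfolding jets_vanishing_on_def jet_space_def by (auto simp: PiE_iff)
  next
    fix w assume w: "w \<in> PiE (proj_points \<times> {..<3}) ?B"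
    then have "w x = 0" if "x \<in> S" for x
      using that assms PiE_mem[OF w, of x] by auto
    with w show "w \<in> jets_vanishing_on S"
      unfolding jets_vanishing_on_def jet_space_def PiE_iff by auto
  qed
  then have "card (jets_vanishing_on S) = (\<Prod>x\<in>proj_points \<times> {..<3}. card (?B x))"
    by (simp add: card_PiE)
  also have "\<dots> = (\<Prod>x\<in>proj_points \<times> {..<3}. if x \<in> S then 1 else card (UNIV :: 'a set))"
    by (rule prod.cong) auto
  also have "\<dots> = card (UNIV :: 'a set) ^ card ((proj_points \<times> {..<3}) - S)"
    by (simp add: prod.If_cases Diff_eq)
  also have "card ((proj_points \<times> {..<3}) - S) = 3 * card (proj_points :: 'a pt set) - card S"
    using assms by (simp add: card_Diff_subset finite_subset)
  finally show ?thesis .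
qed

lemma card_jet_space:
  "card (jet_space :: ('a::{finite,field} pt \<times> nat \<Rightarrow> 'a) set)
    = card (UNIV :: 'a set) ^ (3 * card (proj_points :: 'a pt set))"
  using card_jets_vanishing_on[of "{} :: ('a pt \<times> nat) set"] by (simp add: jets_vanishing_on_def)

lemma bad_jets_eq_UN: "bad_jets = (\<Union>L\<in>proj_points. jets_vanishing_on (line_points L \<times> {..<3}))"
  unfolding bad_jets_def jets_vanishing_on_def by auto

lemma card_jets_vanishing_on_line:
  fixes L :: "'a::{finite,field} pt"
  assumes "L \<in> proj_points"
  shows "card (jets_vanishing_on (line_points L \<times> {..<3}))
    = card (UNIV :: 'a set) ^ (3 * card (proj_points :: 'a pt set) - 3 * (card (UNIV :: 'a set) + 1))"
proof -
  have "line_points L \<times> {..<3::nat} \<subseteq> proj_points \<times> {..<3}"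
    by (auto simp: line_points_def)
  moreover have "card (line_points L \<times> {..<3::nat}) = 3 * (card (UNIV :: 'a set) + 1)"
    using card_line_points[OF assms] by (simp add: card_cartesian_product)
  ultimately show ?thesis
    by (metis card_jets_vanishing_on)
qed

lemma card_jets_vanishing_on_two_lines:
  fixes L L' :: "'a::{finite,field} pt"
  assumes "L \<in> proj_points" "L' \<in> proj_points" "L \<noteq> L'"
  shows "card (jets_vanishing_on (line_points L \<times> {..<3}) \<inter> jets_vanishing_on (line_points L' \<times> {..<3}))
    \<le> card (UNIV :: 'a set) ^ (3 * card (proj_points :: 'a pt set) - 3 * (2 * card (UNIV :: 'a set) + 1))"
proof -
  let ?q = "card (UNIV :: 'a set)"
  let ?S = "(line_points L \<union> line_points L') \<times> {..<3::nat}"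
  have sub: "?S \<subseteq> proj_points \<times> {..<3}"
    by (auto simp: line_points_def)
  have "card (line_points L \<union> line_points L') + card (line_points L \<inter> line_points L')
      = card (line_points L) + card (line_points L')"
    using card_Un_Int[of "line_points L" "line_points L'"] by simp
  then have "2 * ?q + 1 \<le> card (line_points L \<union> line_points L')"
    using card_line_points_Int_le_1[OF assms] card_line_points[OF assms(1)] card_line_points[OF assms(2)]
    by simp
  then have "3 * (2 * ?q + 1) \<le> card ?S"
    by (simp add: card_cartesian_product)
  have "jets_vanishing_on (line_points L \<times> {..<3}) \<inter> jets_vanishing_on (line_points L' \<times> {..<3})
      = jets_vanishing_on ?S"
    unfolding jets_vanishing_on_def by auto
  also have "card \<dots> = ?q ^ (3 * card (proj_points :: 'a pt set) - card ?S)"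
    by (rule card_jets_vanishing_on[OF sub])
  also have "\<dots> \<le> ?q ^ (3 * card (proj_points :: 'a pt set) - 3 * (2 * ?q + 1))"
    using \<open>3 * (2 * ?q + 1) \<le> card ?S\<close> two_le_card_field[where 'a='a]
    by (intro power_increasing diff_le_mono2) auto
  finally show ?thesis .
qed

lemma card_bad_jets_le:
  defines "N \<equiv> card (proj_points :: 'a::{finite,field} pt set)" and "Q \<equiv> card (UNIV :: 'a set)"
  shows "card (bad_jets :: ('a pt \<times> nat \<Rightarrow> 'a) set) \<le> N * Q ^ (3 * N - 3 * (Q + 1))"
proof -
  have "card (bad_jets :: ('a pt \<times> nat \<Rightarrow> 'a) set)
      \<le> (\<Sum>L\<in>proj_points. card (jets_vanishing_on (line_points (L :: 'a pt) \<times> {..<3})))"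
    unfolding bad_jets_eq_UN by (rule card_UN_le) simp
  also have "\<dots> = N * Q ^ (3 * N - 3 * (Q + 1))"
    by (simp add: N_def Q_def card_jets_vanishing_on_line cong: sum.cong)
  finally show ?thesis .
qed

lemma card_bad_jets_ge:
  defines "N \<equiv> card (proj_points :: 'a::{finite,field} pt set)" and "Q \<equiv> card (UNIV :: 'a set)"
  shows "real N * real (Q ^ (3 * N - 3 * (Q + 1)))
      - real (Q ^ (3 * N - 3 * (2 * Q + 1))) * (real N * (real N - 1) / 2)
      \<le> real (card (bad_jets :: ('a pt \<times> nat \<Rightarrow> 'a) set))"
proof -
  let ?V = "\<lambda>L::'a pt. jets_vanishing_on (line_points L \<times> {..<3})"
  have "(\<Sum>L\<in>proj_points. real (card (?V L)))
      - real (Q ^ (3 * N - 3 * (2 * Q + 1))) * (real N * (real N - 1) / 2)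
      \<le> real (card (\<Union>L\<in>proj_points. ?V L))"
    unfolding N_def Q_def
  proof (rule card_UN_ge_sum_minus_pairs)
    show "finite (?V L)" for L
      by (rule finite_subset[OF _ finite_jet_space]) (auto simp: jets_vanishing_on_def)
  qed (simp, (rule card_jets_vanishing_on_two_lines; assumption))
  moreover have "(\<Sum>L\<in>proj_points. real (card (?V L))) = real N * real (Q ^ (3 * N - 3 * (Q + 1)))"
    by (simp add: N_def Q_def card_jets_vanishing_on_line cong: sum.cong)
  ultimately show ?thesis
    by (simp add: bad_jets_eq_UN)
qed

lemma real_power_diff_div_power:
  assumes "0 < Q" "m \<le> M"
  shows "real (Q ^ (M - m)) / real (Q ^ M) = real Q powr (- real m)"
proof -
  have "real (Q ^ (M - m)) / real (Q ^ M) = real Q powr real (M - m) / real Q powr real M"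
    using assms(1) by (simp add: powr_realpow)
  also have "\<dots> = real Q powr (- real m)"
    using assms(2) by (simp add: powr_diff[symmetric] of_nat_diff)
  finally show ?thesis .
qed

lemma pair_term_le:
  fixes q :: real
  assumes q: "1 \<le> q"
  defines "n \<equiv> q^2 + q + 1"
  shows "q powr (-3 * (2 * q + 1)) * (n * (n - 1) / 2) \<le> n * q powr (-3 * (q + 1)) * q powr (-3 * q + 2)"
proof -
  define b where "b = q powr (-3 * (2 * q + 1))"
  have "b * q^2 = b * q powr 2"
    using q by (simp add: powr_numeral)
  also have "\<dots> = q powr (-3 * (q + 1)) * q powr (-3 * q + 2)"
    unfolding b_def powr_add[symmetric] by (simp add: algebra_simps)
  finally have b: "b * q^2 = q powr (-3 * (q + 1)) * q powr (-3 * q + 2)" .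
  have "b * (n * (n - 1) / 2) = (b * n) * ((n - 1) / 2)"
    by simp
  also have "\<dots> \<le> (b * n) * q^2"
    using q by (intro mult_left_mono) (simp_all add: b_def n_def power2_eq_square)
  also have "\<dots> = n * q powr (-3 * (q + 1)) * q powr (-3 * q + 2)"
    by (simp only: b mult.assoc mult.left_commute[of b n])
  finally show ?thesis
    unfolding b_def .
qed

lemma bad_jets_density_bounds:
  fixes q :: real
  defines "q \<equiv> real (card (UNIV :: 'a::{finite,field} set))"
  shows "(q^2 + q + 1) * q powr (-3 * (q + 1)) * (1 - q powr (-3 * q + 2))
           \<le> real (card (bad_jets :: ('a pt \<times> nat \<Rightarrow> 'a) set)) / real (card (jet_space :: ('a pt \<times> nat \<Rightarrow> 'a) set))"
    and "real (card (bad_jets :: ('a pt \<times> nat \<Rightarrow> 'a) set)) / real (card (jet_space :: ('a pt \<times> nat \<Rightarrow> 'a) set))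
           \<le> (q^2 + q + 1) * q powr (-3 * (q + 1))"
proof -
  let ?Q = "card (UNIV :: 'a set)" and ?N = "card (proj_points :: 'a pt set)"
  let ?J = "real (card (jet_space :: ('a pt \<times> nat \<Rightarrow> 'a) set))"
  let ?B = "real (card (bad_jets :: ('a pt \<times> nat \<Rightarrow> 'a) set))"
  define n where "n = q^2 + q + 1"
  define a where "a = q powr (-3 * (q + 1))"
  define b where "b = q powr (-3 * (2 * q + 1))"
  have Q: "2 \<le> ?Q"
    by (rule two_le_card_field)
  have q: "1 \<le> q"
    using Q by (simp add: q_def)
  have N: "real ?N = n"
    unfolding n_def q_def card_proj_points by simp
  have J: "?J > 0"
    using Q by (simp add: card_jet_space)
  have "3 * (?Q + 1) \<le> 3 * ?N" "3 * (2 * ?Q + 1) \<le> 3 * ?N"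
    using Q by (auto simp: card_proj_points power2_eq_square)
  then have line: "real (?Q ^ (3 * ?N - 3 * (?Q + 1))) = a * ?J"
    and pair: "real (?Q ^ (3 * ?N - 3 * (2 * ?Q + 1))) = b * ?J"
    using real_power_diff_div_power J Q
    by (simp_all add: card_jet_space a_def b_def q_def field_simps)
  have "?B \<le> real ?N * real (?Q ^ (3 * ?N - 3 * (?Q + 1)))"
    unfolding of_nat_mult[symmetric] of_nat_le_iff by (rule card_bad_jets_le)
  then have "?B \<le> n * (a * ?J)"
    unfolding line N .
  then show "?B / ?J \<le> (q^2 + q + 1) * q powr (-3 * (q + 1))"
    using J by (simp add: n_def a_def pos_divide_le_eq mult.assoc)
  have "(n * a - b * (n * (n - 1) / 2)) * ?J \<le> ?B"
    using card_bad_jets_ge[where 'a='a] unfolding line pair N by (simp add: algebra_simps)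
  then have lower: "n * a - b * (n * (n - 1) / 2) \<le> ?B / ?J"
    using J by (simp add: pos_le_divide_eq)
  show "(q^2 + q + 1) * q powr (-3 * (q + 1)) * (1 - q powr (-3 * q + 2)) \<le> ?B / ?J"
    using lower pair_term_le[OF q, folded n_def a_def b_def]
    unfolding n_def[symmetric] a_def[symmetric] right_diff_distrib mult_1_right by linarith
qed

theorem mainTheorem8:
  fixes q :: real and dummy :: "'a::{finite,field}"
  defines "q \<equiv> real (card (UNIV :: 'a set))"
  shows "\<exists>L. (\<lambda>d. real (card (Theta d :: (expo \<Rightarrow> 'a) set)) / real (card (homog d :: (expo \<Rightarrow> 'a) set)))
              \<longlonglongrightarrow> L
          \<and> (q^2 + q + 1) * q powr (-3 * (q + 1)) * (1 - q powr (-3 * q + 2)) \<le> L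
          \<and> L \<le> (q^2 + q + 1) * q powr (-3 * (q + 1))"
proof -
  let ?density = "\<lambda>d. real (card (Theta d :: (expo \<Rightarrow> 'a) set)) / real (card (homog d :: (expo \<Rightarrow> 'a) set))"
  let ?L = "real (card (bad_jets :: ('a pt \<times> nat \<Rightarrow> 'a) set)) / real (card (jet_space :: ('a pt \<times> nat \<Rightarrow> 'a) set))"
  have "\<forall>\<^sub>F d in sequentially. ?density d = ?L"
    unfolding eventually_sequentially using Theta_density_eq_bad_jets_density by blast
  then have "?density \<longlonglongrightarrow> ?L"
    by (rule tendsto_eventually)
  with bad_jets_density_bounds[where 'a='a] show ?thesis
    unfolding q_def by blast
qed

end
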